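(* Let $\vartheta\in\mathbb R^d$, $X\sim\mathcal N(\vartheta,I_d/\lambda)$ with $\lambda>0$, and $W\in\mathbb R^{K\times d}$ with all rows $W_i\ne0$. Then $$\big\|\mathbb E[g(WX)^{\otimes2}]-g(W\vartheta)^{\otimes2}\big\|_{op}\le C_K\,\psi_2(\vartheta,W,\lambda),$$ where $C_K$ depends only on $K$ and $$\psi_2(\vartheta,W,\lambda)=\max_{1\le i,j\le K}\Big[(|m_i^\vartheta|^3+\lambda^{-3/2}R_{ii}^{3/2})^{1/3}(|m_j^\vartheta|^3+\lambda^{-3/2}R_{jj}^{3/2})^{1/3}\Big(\bar F\big(\sqrt{\lambda/R_{ii}}\,|m_i^\vartheta|\big)+\bar F\big(\sqrt{\lambda/R_{jj}}\,|m_j^\vartheta|\big)\Big)^{1/3}+\frac{W_i\cdot W_j}\lambda\Big].$$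
   Context: $g(t)=\max(t,0)$ is ReLU applied entrywise; $W_i$ denotes the $i$-th row of $W$, $m_i^\vartheta=W_i\cdot\vartheta$, $R_{ij}=W_i\cdot W_j$; $\bar F(t)=\mathbb P(G>t)$ for $G\sim\mathcal N(0,1)$. *)

theory Defs
  imports "HOL-Probability.Probability"
begin

text \<open>ReLU, applied entrywise.\<close>
definition relu :: "real \<Rightarrow> real" where
  "relu t = max t 0"

text \<open>Gaussian N(theta, I_d / lambda) on R^d, realised as the product measure on
  functions indexed by {..<d} (independent coordinates with variance 1/lambda).\<close>
definition gauss_meas :: "nat \<Rightarrow> (nat \<Rightarrow> real) \<Rightarrow> real \<Rightarrow> (nat \<Rightarrow> real) measure" where
  "gauss_meas d \<theta> lam = PiM {..<d} (\<lambda>l. density lborel (normal_density (\<theta> l) (1 / sqrt lam)))"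

definition Fbar :: "real \<Rightarrow> real" where
  "Fbar t = measure (density lborel std_normal_density) {t<..}"

text \<open>W is a K x d matrix: rows indexed by 'k, columns by {..<d}.\<close>
definition mvec :: "nat \<Rightarrow> ('k \<Rightarrow> nat \<Rightarrow> real) \<Rightarrow> (nat \<Rightarrow> real) \<Rightarrow> 'k \<Rightarrow> real" where
  "mvec d W x i = (\<Sum>l<d. W i l * x l)"

definition Rmat :: "nat \<Rightarrow> ('k \<Rightarrow> nat \<Rightarrow> real) \<Rightarrow> 'k \<Rightarrow> 'k \<Rightarrow> real" where
  "Rmat d W i j = (\<Sum>l<d. W i l * W j l)"

definition second_moment ::
  "nat \<Rightarrow> (nat \<Rightarrow> real) \<Rightarrow> ('k::finite \<Rightarrow> nat \<Rightarrow> real) \<Rightarrow> real \<Rightarrow> real^'k^'k" where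
  "second_moment d \<theta> W lam = (\<chi> i j. LINT x | gauss_meas d \<theta> lam.
       relu (mvec d W x i) * relu (mvec d W x j))"

definition mean_outer :: "nat \<Rightarrow> (nat \<Rightarrow> real) \<Rightarrow> ('k::finite \<Rightarrow> nat \<Rightarrow> real) \<Rightarrow> real^'k^'k" where
  "mean_outer d \<theta> W = (\<chi> i j. relu (mvec d W \<theta> i) * relu (mvec d W \<theta> j))"

definition op_norm :: "real^'k^'k \<Rightarrow> real" where
  "op_norm M = onorm (\<lambda>v. M *v v)"

definition psi2 :: "nat \<Rightarrow> (nat \<Rightarrow> real) \<Rightarrow> ('k::finite \<Rightarrow> nat \<Rightarrow> real) \<Rightarrow> real \<Rightarrow> real" where
  "psi2 d \<theta> W lam = Max ((\<lambda>(i, j).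
      (\<bar>mvec d W \<theta> i\<bar> ^ 3 + lam powr (-3/2) * Rmat d W i i powr (3/2)) powr (1/3)
    * (\<bar>mvec d W \<theta> j\<bar> ^ 3 + lam powr (-3/2) * Rmat d W j j powr (3/2)) powr (1/3)
    * (Fbar (sqrt (lam / Rmat d W i i) * \<bar>mvec d W \<theta> i\<bar>)
       + Fbar (sqrt (lam / Rmat d W j j) * \<bar>mvec d W \<theta> j\<bar>)) powr (1/3)
    + Rmat d W i j / lam) ` UNIV)"

end

theory Submission
  imports Defs
begin

text \<open>Each coordinate Y_i = W_i \<cdot> X is Gaussian with mean m_i and standard deviation
  s_i = (R_ii / lambda)^(1/2). Expanding g(Y_i) g(Y_j) around g(m_i) g(m_j) leaves the product
  of the two deviations, bounded by (s_i^2 + s_j^2)/2 because g is 1-Lipschitz, and two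
  cross terms g(m_i) E[g(Y_j) - g(m_j)]. Since g is affine on each side of 0, the deviation
  E[g(Y) - g(m)] only sees the event that Y and m have opposite signs, which has probability
  Fbar(|m|/s); Cauchy-Schwarz then bounds it by s Fbar(|m|/s)^(1/2) \<le> s Fbar(|m|/s)^(1/3).
  Every such entry bound is at most 5 psi_2, and the operator norm of a K x K matrix is at most
  K^2 times its largest entry.\<close>

lemma relu_measurable [measurable]: "relu \<in> borel_measurable borel"
  unfolding relu_def by measurable

lemma relu_nonneg: "0 \<le> relu a"
  unfolding relu_def by simp

lemma relu_le_abs: "relu a \<le> \<bar>a\<bar>"
  unfolding relu_def by simp

lemma abs_relu_diff_le: "\<bar>relu a - relu b\<bar> \<le> \<bar>a - b\<bar>"
  unfolding relu_def by auto

lemma abs_relu_diff_mult_relu_diff_le: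
  "\<bar>(relu a - relu b) * (relu c - relu e)\<bar> \<le> ((a - b)\<^sup>2 + (c - e)\<^sup>2) / 2"
proof -
  have "\<bar>(relu a - relu b) * (relu c - relu e)\<bar> \<le> \<bar>a - b\<bar> * \<bar>c - e\<bar>"
    unfolding abs_mult by (intro mult_mono abs_relu_diff_le) auto
  also have "\<dots> \<le> ((a - b)\<^sup>2 + (c - e)\<^sup>2) / 2"
    using sum_squares_bound[of "\<bar>a - b\<bar>" "\<bar>c - e\<bar>"] by simp
  finally show ?thesis .
qed

lemma relu_diff_linearization_bounds:
  shows "0 \<le> relu y - relu m - (if 0 < m then y - m else 0)"
    and "relu y - relu m - (if 0 < m then y - m else 0)
           \<le> (if (if 0 < m then y < 0 else 0 < y) then \<bar>y - m\<bar> else 0)"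
  unfolding relu_def by auto

lemma le_mult_sqrt_if_AM_GM_bounds:
  fixes E s P :: real
  assumes s: "0 < s" and P: "0 \<le> P"
    and bound: "\<And>c. 0 < c \<Longrightarrow> E \<le> s / (2 * c) + c * s * P / 2"
  shows "E \<le> s * sqrt P"
proof (cases "P = 0")
  case True
  show ?thesis
  proof (rule ccontr)
    assume "\<not> ?thesis"
    then have "0 < E" using True by simp
    with bound[of "s / E"] True s show False by (simp add: field_simps)
  qed
next
  case False
  then have root: "0 < sqrt P" using P by simp
  have "E \<le> s * sqrt P / 2 + s * (P / sqrt P) / 2"
    using bound[of "1 / sqrt P"] root by (simp add: field_simps)
  also have "\<dots> = s * sqrt P" using P by (simp add: real_div_sqrt)
  finally show ?thesis .
qed

lemma sqrt_le_powr_one_third: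
  fixes P :: real
  assumes "0 \<le> P" "P \<le> 1"
  shows "sqrt P \<le> P powr (1/3)"
  using assms powr_mono'[of "1/3" "1/2" P] by (simp add: powr_half_sqrt)

lemma le_powr_one_third_if_cube_le:
  fixes x z :: real
  assumes "0 \<le> x" "x ^ 3 \<le> z"
  shows "x \<le> z powr (1/3)"
proof -
  have "x = (x ^ 3) powr (1/3)"
  proof (cases "x = 0")
    case False
    then have pos: "0 < x" using assms(1) by simp
    then have "x ^ 3 = x powr 3" using powr_realpow[OF pos, of 3] by simp
    then have "(x ^ 3) powr (1/3) = x powr (3 * (1/3))" by (simp only: powr_powr)
    then show ?thesis using pos by simp
  qed simp
  also have "\<dots> \<le> z powr (1/3)"
    using assms by (intro powr_mono2) auto
  finally show ?thesis .
qed

subsection \<open>Deviations of ReLU of a Gaussian\<close>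

context prob_space
begin

lemma normal_distributed_square_deviation:
  assumes Y: "distributed M lborel Y (normal_density m s)" and s: "0 < s"
  shows "integrable M (\<lambda>x. (Y x - m)\<^sup>2)" and "(\<integral>x. (Y x - m)\<^sup>2 \<partial>M) = s\<^sup>2"
proof -
  show "integrable M (\<lambda>x. (Y x - m)\<^sup>2)"
    using distributed_integrable[OF Y, of "\<lambda>x. (x - m)\<^sup>2"] integrable_normal_moment[of s m 2] s
    by simp
  show "(\<integral>x. (Y x - m)\<^sup>2 \<partial>M) = s\<^sup>2"
    using normal_distributed_variance[OF s Y] normal_distributed_expectation[OF s Y] by simp
qed

lemma normal_distributed_integrable:
  assumes Y: "distributed M lborel Y (normal_density m s)" and s: "0 < s"
  shows "integrable M Y"
  using distributed_integrable[OF Y, of "\<lambda>x. x"] integrable_normal_moment_nz_1[of s m] s by simp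

text \<open>Cauchy-Schwarz, via AM-GM with a free weight c.\<close>
lemma normal_abs_deviation_on_event_le:
  assumes Y: "distributed M lborel Y (normal_density m s)" and s: "0 < s" and A: "A \<in> events"
  shows "integrable M (\<lambda>x. \<bar>Y x - m\<bar> * indicator A x)"
    and "(\<integral>x. \<bar>Y x - m\<bar> * indicator A x \<partial>M) \<le> s * sqrt (prob A)"
proof -
  have [measurable]: "Y \<in> borel_measurable M" "A \<in> sets M"
    using distributed_measurable[OF Y] A by simp_all
  have sq: "integrable M (\<lambda>x. (Y x - m)\<^sup>2 / (2 * s * c))" for c
    using normal_distributed_square_deviation(1)[OF Y s] by simp
  have ind: "integrable M (\<lambda>x. c * s / 2 * indicator A x)" for c
    by (intro integrable_mult_right integrable_real_indicator) (auto simp: emeasure_eq_measure)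
  show int: "integrable M (\<lambda>x. \<bar>Y x - m\<bar> * indicator A x)"
    by (rule Bochner_Integration.integrable_bound[where f="\<lambda>x. Y x - m"])
       (use normal_distributed_integrable[OF Y s] in \<open>auto simp: indicator_def\<close>)
  show "(\<integral>x. \<bar>Y x - m\<bar> * indicator A x \<partial>M) \<le> s * sqrt (prob A)"
  proof (rule le_mult_sqrt_if_AM_GM_bounds[OF s measure_nonneg])
    fix c :: real assume c: "0 < c"
    have pointwise: "\<bar>Y x - m\<bar> * indicator A x \<le> (Y x - m)\<^sup>2 / (2 * s * c) + c * s / 2 * indicator A x"
      for x
    proof (cases "x \<in> A")
      case True
      have "2 * (c * s) * \<bar>Y x - m\<bar> \<le> (c * s)\<^sup>2 + \<bar>Y x - m\<bar>\<^sup>2"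
        by (rule sum_squares_bound)
      then show ?thesis using True c s by (simp add: field_simps power2_eq_square)
    qed (use c s in simp)
    have "(\<integral>x. \<bar>Y x - m\<bar> * indicator A x \<partial>M)
        \<le> (\<integral>x. (Y x - m)\<^sup>2 / (2 * s * c) + c * s / 2 * indicator A x \<partial>M)"
      by (intro integral_mono int Bochner_Integration.integrable_add sq ind pointwise)
    also have "\<dots> = s\<^sup>2 / (2 * s * c) + c * s / 2 * prob A"
      unfolding Bochner_Integration.integral_add[OF sq ind]
      using normal_distributed_square_deviation(2)[OF Y s] by simp
    also have "\<dots> = s / (2 * c) + c * s * prob A / 2"
      using s by (simp add: power2_eq_square)
    finally show "(\<integral>x. \<bar>Y x - m\<bar> * indicator A x \<partial>M) \<le> s / (2 * c) + c * s * prob A / 2" .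
  qed
qed

lemma prob_normal_opposite_sign:
  assumes Y: "distributed M lborel Y (normal_density m s)" and s: "0 < s"
  shows "prob {x \<in> space M. if 0 < m then Y x < 0 else 0 < Y x} = Fbar (\<bar>m\<bar> / s)"
proof -
  define \<sigma> :: real where "\<sigma> = (if 0 < m then -1 else 1)"
  have Z: "distributed M lborel (\<lambda>x. (Y x - m) / s) std_normal_density"
    using Y normal_standard_normal_convert[OF s] by simp
  have "\<bar>\<sigma>\<bar> = 1" "\<sigma> \<noteq> 0" by (simp_all add: \<sigma>_def)
  then have G: "distributed M lborel (\<lambda>x. \<sigma> * ((Y x - m) / s)) std_normal_density"
    using normal_density_affine[OF Z, of \<sigma> 0] by (simp only: add_0_left mult_zero_right mult_1_right) simp
  have "{x \<in> space M. if 0 < m then Y x < 0 else 0 < Y x}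
      = (\<lambda>x. \<sigma> * ((Y x - m) / s)) -` {\<bar>m\<bar> / s<..} \<inter> space M"
    using s by (auto simp: \<sigma>_def field_simps)
  also have "prob \<dots> = measure (distr M lborel (\<lambda>x. \<sigma> * ((Y x - m) / s))) {\<bar>m\<bar> / s<..}"
    using distributed_measurable[OF G] by (simp add: measure_distr)
  also have "\<dots> = Fbar (\<bar>m\<bar> / s)"
    unfolding Fbar_def distributed_distr_eq_density[OF G] ..
  finally show ?thesis .
qed

lemma integrable_relu_diff:
  assumes "integrable M Y"
  shows "integrable M (\<lambda>x. relu (Y x) - relu m)"
  by (rule Bochner_Integration.integrable_bound[where f="\<lambda>x. Y x - m"])
     (use assms abs_relu_diff_le in auto)

lemma abs_integral_relu_diff_le:
  assumes intY: "integrable M Y" and mean: "expectation Y = m"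
  defines "A \<equiv> {x \<in> space M. if 0 < m then Y x < 0 else 0 < Y x}"
  shows "\<bar>\<integral>x. relu (Y x) - relu m \<partial>M\<bar> \<le> (\<integral>x. \<bar>Y x - m\<bar> * indicator A x \<partial>M)"
proof -
  have [measurable]: "Y \<in> borel_measurable M"
    using intY by simp
  note int = integrable_relu_diff[OF intY]
  define lin where "lin = (\<lambda>x. if 0 < m then Y x - m else 0)"
  have int_lin: "integrable M lin"
    by (cases "0 < m") (simp_all add: lin_def intY)
  have "integral\<^sup>L M lin = 0"
    using mean by (cases "0 < m") (simp_all add: lin_def intY prob_space)
  define h where "h = (\<lambda>x. relu (Y x) - relu m - lin x)"
  have "(\<integral>x. relu (Y x) - relu m \<partial>M) = integral\<^sup>L M h"
    unfolding h_def Bochner_Integration.integral_diff[OF int int_lin] \<open>integral\<^sup>L M lin = 0\<close>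
    by simp
  moreover have "0 \<le> integral\<^sup>L M h"
    unfolding h_def lin_def using relu_diff_linearization_bounds(1) by simp
  ultimately have "\<bar>\<integral>x. relu (Y x) - relu m \<partial>M\<bar> = integral\<^sup>L M h"
    by simp
  also have "\<dots> \<le> (\<integral>x. \<bar>Y x - m\<bar> * indicator A x \<partial>M)"
  proof (rule integral_mono)
    show "integrable M h"
      unfolding h_def by (rule Bochner_Integration.integrable_diff[OF int int_lin])
    show "integrable M (\<lambda>x. \<bar>Y x - m\<bar> * indicator A x)"
      by (rule Bochner_Integration.integrable_bound[where f="\<lambda>x. Y x - m"])
         (use intY in \<open>auto simp: A_def indicator_def\<close>)
    fix x assume "x \<in> space M"
    have "h x \<le> (if (if 0 < m then Y x < 0 else 0 < Y x) then \<bar>Y x - m\<bar> else 0)"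
      unfolding h_def lin_def by (rule relu_diff_linearization_bounds(2))
    also have "\<dots> = \<bar>Y x - m\<bar> * indicator A x"
      using \<open>x \<in> space M\<close> by (simp add: A_def indicator_def)
    finally show "h x \<le> \<bar>Y x - m\<bar> * indicator A x" .
  qed
  finally show ?thesis .
qed

lemma relu_normal_mean_deviation:
  assumes Y: "distributed M lborel Y (normal_density m s)" and s: "0 < s"
  shows "\<bar>\<integral>x. relu (Y x) - relu m \<partial>M\<bar> \<le> s * Fbar (\<bar>m\<bar> / s) powr (1/3)"
proof -
  define A where "A = {x \<in> space M. if 0 < m then Y x < 0 else 0 < Y x}"
  have [measurable]: "Y \<in> borel_measurable M"
    using distributed_measurable[OF Y] by simp
  have "A \<in> events" unfolding A_def by measurable
  have "\<bar>\<integral>x. relu (Y x) - relu m \<partial>M\<bar> \<le> (\<integral>x. \<bar>Y x - m\<bar> * indicator A x \<partial>M)"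
    unfolding A_def
    by (intro abs_integral_relu_diff_le normal_distributed_integrable[OF Y s]
        normal_distributed_expectation[OF s Y])
  also have "\<dots> \<le> s * sqrt (prob A)"
    by (rule normal_abs_deviation_on_event_le(2)[OF Y s \<open>A \<in> events\<close>])
  also have "\<dots> \<le> s * prob A powr (1/3)"
    using s by (intro mult_left_mono sqrt_le_powr_one_third) auto
  also have "prob A = Fbar (\<bar>m\<bar> / s)"
    unfolding A_def by (rule prob_normal_opposite_sign[OF Y s])
  finally show ?thesis .
qed

lemma relu_normal_deviations_product:
  assumes Yi: "distributed M lborel Yi (normal_density mi si)" and si: "0 < si"
    and Yj: "distributed M lborel Yj (normal_density mj sj)" and sj: "0 < sj"
  defines "g \<equiv> \<lambda>x. (relu (Yi x) - relu mi) * (relu (Yj x) - relu mj)"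
  shows "integrable M g" and "\<bar>integral\<^sup>L M g\<bar> \<le> (si\<^sup>2 + sj\<^sup>2) / 2"
proof -
  note sqi = normal_distributed_square_deviation[OF Yi si]
    and sqj = normal_distributed_square_deviation[OF Yj sj]
  have [measurable]: "Yi \<in> borel_measurable M" "Yj \<in> borel_measurable M"
    using distributed_measurable[OF Yi] distributed_measurable[OF Yj] by simp_all
  define f where "f = (\<lambda>x. ((Yi x - mi)\<^sup>2 + (Yj x - mj)\<^sup>2) / 2)"
  have int_f: "integrable M f"
    unfolding f_def using sqi(1) sqj(1) by simp
  have g_le_f: "\<bar>g x\<bar> \<le> f x" for x
    unfolding g_def f_def by (rule abs_relu_diff_mult_relu_diff_le)
  show int_g: "integrable M g"
  proof (rule Bochner_Integration.integrable_bound[OF int_f])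
    show "AE x in M. norm (g x) \<le> norm (f x)"
      using g_le_f abs_ge_self order_trans by (simp add: f_def)
  qed (simp add: g_def)
  have "\<bar>integral\<^sup>L M g\<bar> \<le> (\<integral>x. \<bar>g x\<bar> \<partial>M)"
    using integral_norm_bound[of M g] by simp
  also have "\<dots> \<le> integral\<^sup>L M f"
    using int_g int_f g_le_f by (intro integral_mono) auto
  also have "\<dots> = (si\<^sup>2 + sj\<^sup>2) / 2"
    unfolding f_def using sqi sqj by simp
  finally show "\<bar>integral\<^sup>L M g\<bar> \<le> (si\<^sup>2 + sj\<^sup>2) / 2" .
qed

lemma relu_normal_product_deviation:
  assumes Yi: "distributed M lborel Yi (normal_density mi si)" and si: "0 < si"
    and Yj: "distributed M lborel Yj (normal_density mj sj)" and sj: "0 < sj"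
  shows "\<bar>(\<integral>x. relu (Yi x) * relu (Yj x) \<partial>M) - relu mi * relu mj\<bar>
     \<le> (si\<^sup>2 + sj\<^sup>2) / 2 + \<bar>mi\<bar> * (sj * Fbar (\<bar>mj\<bar> / sj) powr (1/3))
        + \<bar>mj\<bar> * (si * Fbar (\<bar>mi\<bar> / si) powr (1/3))"
proof -
  note prod = relu_normal_deviations_product[OF Yi si Yj sj]
  have intY: "integrable M Yi" "integrable M Yj"
    using normal_distributed_integrable Yi si Yj sj by blast+
  have "relu (Yi x) * relu (Yj x) = (relu (Yi x) - relu mi) * (relu (Yj x) - relu mj)
      + relu mi * (relu (Yj x) - relu mj) + relu mj * (relu (Yi x) - relu mi) + relu mi * relu mj"
    for x by (simp add: algebra_simps)
  then have "(\<integral>x. relu (Yi x) * relu (Yj x) \<partial>M) - relu mi * relu mj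
      = (\<integral>x. (relu (Yi x) - relu mi) * (relu (Yj x) - relu mj) \<partial>M)
        + relu mi * (\<integral>x. relu (Yj x) - relu mj \<partial>M) + relu mj * (\<integral>x. relu (Yi x) - relu mi \<partial>M)"
    using prod(1) integrable_relu_diff[OF intY(1)] integrable_relu_diff[OF intY(2)]
    by (simp add: prob_space)
  moreover have "\<bar>relu mi * (\<integral>x. relu (Yj x) - relu mj \<partial>M)\<bar> \<le> \<bar>mi\<bar> * (sj * Fbar (\<bar>mj\<bar> / sj) powr (1/3))"
    unfolding abs_mult using relu_normal_mean_deviation[OF Yj sj]
    by (intro mult_mono) (auto simp: abs_of_nonneg[OF relu_nonneg] relu_le_abs)
  moreover have "\<bar>relu mj * (\<integral>x. relu (Yi x) - relu mi \<partial>M)\<bar> \<le> \<bar>mj\<bar> * (si * Fbar (\<bar>mi\<bar> / si) powr (1/3))"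
    unfolding abs_mult using relu_normal_mean_deviation[OF Yi si]
    by (intro mult_mono) (auto simp: abs_of_nonneg[OF relu_nonneg] relu_le_abs)
  ultimately show ?thesis using prod(2) by linarith
qed

end

subsection \<open>Linear functionals of the Gaussian vector\<close>

lemma indep_vars_PiM_coordinates:
  assumes "I \<noteq> {}" and N: "\<And>i. i \<in> I \<Longrightarrow> prob_space (N i)"
  shows "prob_space.indep_vars (PiM I N) N (\<lambda>i x. x i) I"
proof -
  interpret prob_space "PiM I N" by (rule prob_space_PiM[OF N])
  have "distr (PiM I N) (PiM I N) (\<lambda>x. \<lambda>i\<in>I. x i) = distr (PiM I N) (PiM I N) (\<lambda>x. x)"
    by (intro distr_cong) (auto simp: space_PiM PiE_def extensional_def restrict_def fun_eq_iff)
  also have "\<dots> = PiM I N"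
    by simp
  also have "\<dots> = PiM I (\<lambda>i. distr (PiM I N) (N i) (\<lambda>x. x i))"
    by (intro PiM_cong refl) (simp add: distr_PiM_component N)
  finally show ?thesis
    by (subst indep_vars_iff_distr_eq_PiM'[OF \<open>I \<noteq> {}\<close>]) auto
qed

lemma gauss_meas_prob_space: "0 < lam \<Longrightarrow> prob_space (gauss_meas d \<theta> lam)"
  unfolding gauss_meas_def by (intro prob_space_PiM prob_space_normal_density) simp

lemma gauss_meas_coordinate_distributed:
  assumes "0 < lam" and "l < d"
  shows "distributed (gauss_meas d \<theta> lam) lborel (\<lambda>x. x l) (normal_density (\<theta> l) (1 / sqrt lam))"
proof -
  let ?N = "density lborel (normal_density (\<theta> l) (1 / sqrt lam))"
  have "(\<lambda>x. x l) \<in> measurable (gauss_meas d \<theta> lam) ?N"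
    unfolding gauss_meas_def using assms(2) by (intro measurable_component_singleton) simp
  then have meas: "(\<lambda>x. x l) \<in> borel_measurable (gauss_meas d \<theta> lam)"
    by (subst measurable_cong_sets[where M'="gauss_meas d \<theta> lam" and N'="?N"]) simp_all
  have "distr (gauss_meas d \<theta> lam) lborel (\<lambda>x. x l) = distr (gauss_meas d \<theta> lam) ?N (\<lambda>x. x l)"
    by (intro distr_cong) auto
  also have "\<dots> = ?N"
    unfolding gauss_meas_def using assms by (intro distr_PiM_component prob_space_normal_density) auto
  finally show ?thesis
    using meas unfolding distributed_def by simp
qed

lemma gauss_meas_mvec_distributed:
  assumes lam: "0 < lam" and row: "\<exists>l<d. W i l \<noteq> 0"
  shows "distributed (gauss_meas d \<theta> lam) lborel (\<lambda>x. mvec d W x i)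
           (normal_density (mvec d W \<theta> i) (sqrt (Rmat d W i i / lam)))"
proof -
  interpret prob_space "gauss_meas d \<theta> lam" by (rule gauss_meas_prob_space[OF lam])
  \<comment> \<open>Zero weights are dropped: \<open>sum_indep_normal\<close> needs positive standard deviations.\<close>
  define L where "L = {l. l < d \<and> W i l \<noteq> 0}"
  have L: "finite L" "L \<noteq> {}" "L \<subseteq> {..<d}"
    using row by (auto simp: L_def)
  have "indep_vars (\<lambda>l. density lborel (normal_density (\<theta> l) (1 / sqrt lam))) (\<lambda>l x. x l) {..<d}"
    unfolding gauss_meas_def
    by (rule indep_vars_PiM_coordinates) (use L lam in \<open>auto intro: prob_space_normal_density\<close>)
  then have "indep_vars (\<lambda>_. borel) (\<lambda>l x. W i l * x l) {..<d}"
    by (rule indep_vars_compose2) simp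
  then have indep: "indep_vars (\<lambda>_. borel) (\<lambda>l x. W i l * x l) L"
    using L(3) by (rule indep_vars_subset)
  have normal: "distributed (gauss_meas d \<theta> lam) lborel (\<lambda>x. W i l * x l)
      (normal_density (W i l * \<theta> l) (\<bar>W i l\<bar> * (1 / sqrt lam)))" if "l \<in> L" for l
  proof -
    have "distributed (gauss_meas d \<theta> lam) lborel (\<lambda>x. 0 + W i l * x l)
        (normal_density (0 + W i l * \<theta> l) (\<bar>W i l\<bar> * (1 / sqrt lam)))"
      using that lam by (intro normal_density_affine gauss_meas_coordinate_distributed) (auto simp: L_def)
    then show ?thesis by (simp only: add_0_left)
  qed
  have "distributed (gauss_meas d \<theta> lam) lborel (\<lambda>x. \<Sum>l\<in>L. W i l * x l)
     (normal_density (\<Sum>l\<in>L. W i l * \<theta> l) (sqrt (\<Sum>l\<in>L. (\<bar>W i l\<bar> * (1 / sqrt lam))\<^sup>2)))"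
    by (rule sum_indep_normal[OF L(1,2) indep _ normal]) (use lam in \<open>simp_all add: L_def\<close>)
  moreover have sum_L: "(\<Sum>l\<in>L. W i l * f l) = (\<Sum>l<d. W i l * f l)" for f :: "nat \<Rightarrow> real"
    by (intro sum.mono_neutral_left) (auto simp: L_def)
  moreover have "(\<Sum>l\<in>L. (\<bar>W i l\<bar> * (1 / sqrt lam))\<^sup>2) = Rmat d W i i / lam"
    using lam sum_L[of "\<lambda>l. W i l / lam"]
    by (simp add: Rmat_def sum_divide_distrib power2_eq_square power_mult_distrib)
  ultimately show ?thesis
    unfolding mvec_def by simp
qed

lemma Rmat_diag_pos:
  assumes "\<exists>l<d. W i l \<noteq> 0"
  shows "0 < Rmat d W i i"
proof -
  obtain l where l: "l < d" "W i l \<noteq> 0" using assms by auto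
  have "0 < W i l * W i l" using l(2) not_real_square_gt_zero by blast
  also have "\<dots> \<le> Rmat d W i i"
    unfolding Rmat_def using l(1) by (intro member_le_sum) auto
  finally show ?thesis .
qed

lemma abs_Rmat_le: "\<bar>Rmat d W i j\<bar> \<le> (Rmat d W i i + Rmat d W j j) / 2"
proof -
  have "\<bar>Rmat d W i j\<bar> \<le> (\<Sum>l<d. \<bar>W i l\<bar> * \<bar>W j l\<bar>)"
    unfolding Rmat_def abs_mult[symmetric] by (rule sum_abs)
  also have "\<dots> \<le> (\<Sum>l<d. ((W i l)\<^sup>2 + (W j l)\<^sup>2) / 2)"
  proof (intro sum_mono)
    fix l
    show "\<bar>W i l\<bar> * \<bar>W j l\<bar> \<le> ((W i l)\<^sup>2 + (W j l)\<^sup>2) / 2"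
      using sum_squares_bound[of "\<bar>W i l\<bar>" "\<bar>W j l\<bar>"] by simp
  qed
  also have "\<dots> = (Rmat d W i i + Rmat d W j j) / 2"
    unfolding Rmat_def by (simp only: sum_divide_distrib[symmetric] sum.distrib power2_eq_square)
  finally show ?thesis .
qed

lemma psi2_ge:
  assumes lam: "0 < lam" and Ri: "0 < Rmat d W i i" and Rj: "0 < Rmat d W j j"
  shows "(\<bar>mvec d W \<theta> i\<bar> ^ 3 + sqrt (Rmat d W i i / lam) ^ 3) powr (1/3)
      * (\<bar>mvec d W \<theta> j\<bar> ^ 3 + sqrt (Rmat d W j j / lam) ^ 3) powr (1/3)
      * (Fbar (\<bar>mvec d W \<theta> i\<bar> / sqrt (Rmat d W i i / lam))
         + Fbar (\<bar>mvec d W \<theta> j\<bar> / sqrt (Rmat d W j j / lam))) powr (1/3)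
      + Rmat d W i j / lam \<le> psi2 d \<theta> W lam"
proof -
  have cube: "lam powr (-3/2) * R powr (3/2) = sqrt (R / lam) ^ 3" if "0 < R" for R
  proof -
    have "sqrt (R / lam) ^ 3 = ((R / lam) powr (1/2)) powr 3"
      using that lam by (simp add: powr_half_sqrt powr_realpow)
    also have "\<dots> = R powr (3/2) / lam powr (3/2)"
      using that lam by (simp add: powr_powr powr_divide)
    finally show ?thesis by (simp add: powr_minus_divide)
  qed
  have tail: "sqrt (lam / R) * \<bar>m\<bar> = \<bar>m\<bar> / sqrt (R / lam)" if "0 < R" for R m
    using that lam by (simp add: real_sqrt_divide field_simps)
  show ?thesis
    unfolding psi2_def cube[OF Ri, symmetric] cube[OF Rj, symmetric] tail[OF Ri, symmetric]
      tail[OF Rj, symmetric]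
    by (rule Max_ge) auto
qed

lemma deviation_bound_le_psi:
  fixes si sj Pi Pj mi mj r psi :: real
  assumes "0 < si" "0 < sj" "0 \<le> Pi" "0 \<le> Pj"
    and term_le: "(\<bar>mi\<bar> ^ 3 + si ^ 3) powr (1/3) * (\<bar>mj\<bar> ^ 3 + sj ^ 3) powr (1/3)
        * (Pi + Pj) powr (1/3) + r \<le> psi"
    and "si\<^sup>2 \<le> psi" "sj\<^sup>2 \<le> psi" "\<bar>r\<bar> \<le> (si\<^sup>2 + sj\<^sup>2) / 2"
  shows "(si\<^sup>2 + sj\<^sup>2) / 2 + \<bar>mi\<bar> * (sj * Pj powr (1/3)) + \<bar>mj\<bar> * (si * Pi powr (1/3)) \<le> 5 * psi"
proof -
  define ai where "ai = (\<bar>mi\<bar> ^ 3 + si ^ 3) powr (1/3)"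
  define aj where "aj = (\<bar>mj\<bar> ^ 3 + sj ^ 3) powr (1/3)"
  define Q where "Q = (Pi + Pj) powr (1/3)"
  have ai: "\<bar>mi\<bar> \<le> ai" "si \<le> ai" and aj: "\<bar>mj\<bar> \<le> aj" "sj \<le> aj"
    unfolding ai_def aj_def using assms(1,2) by (auto intro!: le_powr_one_third_if_cube_le)
  have Q: "Pi powr (1/3) \<le> Q" "Pj powr (1/3) \<le> Q"
    unfolding Q_def using assms(3,4) by (auto intro!: powr_mono2)
  have "\<bar>mi\<bar> * (sj * Pj powr (1/3)) \<le> ai * (aj * Q)"
    using ai aj Q assms(2) by (intro mult_mono) auto
  moreover have "\<bar>mj\<bar> * (si * Pi powr (1/3)) \<le> aj * (ai * Q)"
    using ai aj Q assms(1) by (intro mult_mono) auto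
  moreover have "ai * aj * Q \<le> 2 * psi"
  proof -
    have "ai * aj * Q + r \<le> psi" using term_le unfolding ai_def aj_def Q_def .
    moreover have "- r \<le> (si\<^sup>2 + sj\<^sup>2) / 2" using assms(8) by linarith
    ultimately show ?thesis using assms(6,7) by argo
  qed
  ultimately show ?thesis
    using assms(6,7) by (simp add: ac_simps) argo
qed

lemma second_moment_entry_le_psi2:
  assumes lam: "0 < lam" and rows: "\<forall>i. \<exists>l<d. W i l \<noteq> 0"
  shows "\<bar>(second_moment d \<theta> W lam - mean_outer d \<theta> W) $ i $ j\<bar> \<le> 5 * psi2 d \<theta> W lam"
proof -
  interpret prob_space "gauss_meas d \<theta> lam" by (rule gauss_meas_prob_space[OF lam])
  define m where "m = mvec d W \<theta>"
  define s where "s k = sqrt (Rmat d W k k / lam)" for k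
  have R_pos: "0 < Rmat d W k k" for k
    using rows by (intro Rmat_diag_pos) simp
  have s_pos: "0 < s k" and s_sq: "(s k)\<^sup>2 = Rmat d W k k / lam" for k
    unfolding s_def using R_pos[of k] lam by simp_all
  have Y: "distributed (gauss_meas d \<theta> lam) lborel (\<lambda>x. mvec d W x k) (normal_density (m k) (s k))"
    for k unfolding m_def s_def using lam rows by (intro gauss_meas_mvec_distributed) simp_all
  note psi = psi2_ge[OF lam R_pos R_pos, of \<theta>, folded m_def s_def]
  have var_le: "(s k)\<^sup>2 \<le> psi2 d \<theta> W lam" for k
  proof -
    have "0 \<le> (\<bar>m k\<bar> ^ 3 + s k ^ 3) powr (1/3) * (\<bar>m k\<bar> ^ 3 + s k ^ 3) powr (1/3)
        * (Fbar (\<bar>m k\<bar> / s k) + Fbar (\<bar>m k\<bar> / s k)) powr (1/3)"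
      by simp
    then show ?thesis using psi[of k k] s_sq[of k] by linarith
  qed
  have "\<bar>Rmat d W i j / lam\<bar> = \<bar>Rmat d W i j\<bar> / lam"
    using lam by simp
  also have "\<dots> \<le> ((Rmat d W i i + Rmat d W j j) / 2) / lam"
    using lam by (intro divide_right_mono abs_Rmat_le) simp
  also have "\<dots> = ((s i)\<^sup>2 + (s j)\<^sup>2) / 2"
    by (simp add: s_sq add_divide_distrib)
  finally have cov: "\<bar>Rmat d W i j / lam\<bar> \<le> ((s i)\<^sup>2 + (s j)\<^sup>2) / 2" .
  have "\<bar>(second_moment d \<theta> W lam - mean_outer d \<theta> W) $ i $ j\<bar>
      = \<bar>(\<integral>x. relu (mvec d W x i) * relu (mvec d W x j) \<partial>gauss_meas d \<theta> lam) - relu (m i) * relu (m j)\<bar>"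
    by (simp add: second_moment_def mean_outer_def m_def)
  also have "\<dots> \<le> ((s i)\<^sup>2 + (s j)\<^sup>2) / 2 + \<bar>m i\<bar> * (s j * Fbar (\<bar>m j\<bar> / s j) powr (1/3))
      + \<bar>m j\<bar> * (s i * Fbar (\<bar>m i\<bar> / s i) powr (1/3))"
    by (rule relu_normal_product_deviation[OF Y s_pos Y s_pos])
  also have "\<dots> \<le> 5 * psi2 d \<theta> W lam"
    by (rule deviation_bound_le_psi[OF s_pos s_pos _ _ psi var_le var_le cov]) (simp_all add: Fbar_def)
  finally show ?thesis .
qed

lemma op_norm_le_entrywise:
  fixes B :: "real^'k^'k"
  assumes "\<And>i j. \<bar>B $ i $ j\<bar> \<le> b"
  shows "op_norm B \<le> real CARD('k) ^ 2 * b"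
  unfolding op_norm_def
proof (rule onorm_le)
  fix v :: "real^'k"
  have "norm (B *v v) \<le> (\<Sum>i\<in>UNIV. \<bar>(B *v v) $ i\<bar>)"
    by (rule norm_le_l1_cart)
  also have "\<dots> \<le> (\<Sum>i\<in>(UNIV::'k set). \<Sum>j\<in>(UNIV::'k set). b * norm v)"
  proof (rule sum_mono)
    fix i :: 'k
    have "\<bar>(B *v v) $ i\<bar> \<le> (\<Sum>j\<in>UNIV. \<bar>B $ i $ j\<bar> * \<bar>v $ j\<bar>)"
      unfolding matrix_vector_mult_def abs_mult[symmetric] by (simp add: sum_abs)
    also have "\<dots> \<le> (\<Sum>j\<in>(UNIV::'k set). b * norm v)"
      using assms by (intro sum_mono mult_mono component_le_norm_cart) (auto intro: order_trans[OF abs_ge_zero])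
    finally show "\<bar>(B *v v) $ i\<bar> \<le> (\<Sum>j\<in>(UNIV::'k set). b * norm v)" .
  qed
  also have "\<dots> = real CARD('k) ^ 2 * b * norm v"
    by (simp add: power2_eq_square)
  finally show "norm (B *v v) \<le> real CARD('k) ^ 2 * b * norm v" .
qed

theorem lemma4p1:
  "\<exists>C::real. \<forall>(d::nat) (\<theta>::nat \<Rightarrow> real) (W::'k::finite \<Rightarrow> nat \<Rightarrow> real) (lam::real).
     lam > 0 \<longrightarrow> (\<forall>i. \<exists>l<d. W i l \<noteq> 0) \<longrightarrow>
     op_norm (second_moment d \<theta> W lam - mean_outer d \<theta> W) \<le> C * psi2 d \<theta> W lam"
proof (intro exI[of _ "5 * real CARD('k) ^ 2"] allI impI)
  fix d :: nat and \<theta> :: "nat \<Rightarrow> real" and W :: "'k \<Rightarrow> nat \<Rightarrow> real" and lam :: real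
  assume "lam > 0" and "\<forall>i. \<exists>l<d. W i l \<noteq> 0"
  then have "op_norm (second_moment d \<theta> W lam - mean_outer d \<theta> W)
      \<le> real CARD('k) ^ 2 * (5 * psi2 d \<theta> W lam)"
    by (intro op_norm_le_entrywise second_moment_entry_le_psi2)
  then show "op_norm (second_moment d \<theta> W lam - mean_outer d \<theta> W)
      \<le> 5 * real CARD('k) ^ 2 * psi2 d \<theta> W lam"
    by (simp add: ac_simps)
qed

end
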